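(* Let $D\mathcal{M}$ be an $\ell c$DCB system. Then every positive equilibrium $x^*\in\mathbb{R}^n_{>0}$ of $D\mathcal{M}$ (viewed as a constant function on $[-\tau,0]$) is Lyapunov stable for the delay differential equation of $D\mathcal{M}$ on $C([-\tau,0];\mathbb{R}^n_{>0})$ with the supremum norm.
   Context: For $x,y\in\mathbb{R}^n$ with $x\ge 0$, write $x^{y}=\prod_{j=1}^n x_j^{y_j}$. A delayed mass-action system on species $X_1,\dots,X_n$ consists of reactions $R_i: y_{\cdot i}\to y'_{\cdot i}$, $i=1,\dots,r$, with complexes $y_{\cdot i},y'_{\cdot i}\in\mathbb{R}^n_{\ge0}$, rate constants $\kappa_i>0$ and delays $\tau_i\ge0$; with $\tau\ge\max_i\tau_i$, its dynamics is the delay differential equation $\dot x(t)=F(x_t):=\sum_{i=1}^r\kappa_i\big[x(t-\tau_i)^{y_{\cdot i}}y'_{\cdot i}-x(t)^{y_{\cdot i}}y_{\cdot i}\big]$, $t\ge 0$, where $x_t(s)=x(t+s)$, $s\in[-\tau,0]$, with initial function $\theta\in C([-\tau,0];\mathbb{R}^n_{\ge0})$. A positive equilibrium is $x^*\in\mathbb{R}^n_{>0}$ with $\sum_i\kappa_i (x^* )^{y_{\cdot i}}(y'_{\cdot i}-y_{\cdot i})=0$. A vector $\bar x\in\mathbb{R}^n_{>0}$ is a complex balanced equilibrium if for every complex $\eta$ of the network $\sum_{i: y_{\cdot i}=\eta}\kappa_i\bar x^{y_{\cdot i}}=\sum_{i: y'_{\cdot i}=\eta}\kappa_i\bar x^{y_{\cdot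 i}}$. A delayed complex balanced (DCB) system is a delayed mass-action system admitting a positive complex balanced equilibrium. Two delayed mass-action systems $D\mathcal{M}$ (right-hand side $F$) and $D\tilde{\mathcal{M}}$ (right-hand side $\tilde F$) on the same species are linearly conjugate via a positive diagonal matrix $Q$ if $F(Q\psi)=Q\tilde F(\psi)$ for all $\psi\in C([-\tau,0];\mathbb{R}^n_{>0})$, i.e. $x(t)=Q\tilde x(t)$ maps solutions of $D\tilde{\mathcal{M}}$ to solutions of $D\mathcal{M}$. An $\ell c$DCB system is a delayed mass-action system that is linearly conjugate via some positive diagonal matrix to a DCB system. *)

theory Defs
  imports "HOL-Analysis.Analysis"
begin

text \<open>A delayed mass-action system has r reactions indexed by i < r, with reactant
  complexes Y i, product complexes Y' i, rate constants k i and delays d i.\<close>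

definition mon :: "real^'n \<Rightarrow> real^'n \<Rightarrow> real" where
  "mon x y = (\<Prod>j\<in>UNIV. if y $ j = 0 then 1 else (x $ j) powr (y $ j))"

definition nonneg_vec :: "real^'n \<Rightarrow> bool" where
  "nonneg_vec v \<longleftrightarrow> (\<forall>j. 0 \<le> v $ j)"

definition pos_vec :: "real^'n \<Rightarrow> bool" where
  "pos_vec v \<longleftrightarrow> (\<forall>j. 0 < v $ j)"

definition dmas ::
  "real \<Rightarrow> nat \<Rightarrow> (nat \<Rightarrow> real^'n) \<Rightarrow> (nat \<Rightarrow> real^'n) \<Rightarrow> (nat \<Rightarrow> real) \<Rightarrow> (nat \<Rightarrow> real) \<Rightarrow> bool"
  where
  "dmas tau r Y Y' k d \<longleftrightarrow>
     (\<forall>i<r. nonneg_vec (Y i) \<and> nonneg_vec (Y' i) \<and> 0 < k i \<and> 0 \<le> d i \<and> d i \<le> tau)"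

definition dmas_rhs ::
  "nat \<Rightarrow> (nat \<Rightarrow> real^'n) \<Rightarrow> (nat \<Rightarrow> real^'n) \<Rightarrow> (nat \<Rightarrow> real) \<Rightarrow> (nat \<Rightarrow> real)
   \<Rightarrow> (real \<Rightarrow> real^'n) \<Rightarrow> real^'n" where
  "dmas_rhs r Y Y' k d psi =
     (\<Sum>i<r. k i *\<^sub>R (mon (psi (- d i)) (Y i) *\<^sub>R Y' i - mon (psi 0) (Y i) *\<^sub>R Y i))"

definition pos_equilibrium ::
  "nat \<Rightarrow> (nat \<Rightarrow> real^'n) \<Rightarrow> (nat \<Rightarrow> real^'n) \<Rightarrow> (nat \<Rightarrow> real) \<Rightarrow> real^'n \<Rightarrow> bool" where
  "pos_equilibrium r Y Y' k xs \<longleftrightarrow>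
     pos_vec xs \<and> (\<Sum>i<r. (k i * mon xs (Y i)) *\<^sub>R (Y' i - Y i)) = 0"

definition complex_balanced ::
  "nat \<Rightarrow> (nat \<Rightarrow> real^'n) \<Rightarrow> (nat \<Rightarrow> real^'n) \<Rightarrow> (nat \<Rightarrow> real) \<Rightarrow> real^'n \<Rightarrow> bool" where
  "complex_balanced r Y Y' k xb \<longleftrightarrow> pos_vec xb \<and>
     (\<forall>eta \<in> Y ` {..<r} \<union> Y' ` {..<r}.
        (\<Sum>i\<in>{i. i < r \<and> Y i = eta}. k i * mon xb (Y i)) =
        (\<Sum>i\<in>{i. i < r \<and> Y' i = eta}. k i * mon xb (Y i)))"

definition DCB ::
  "real \<Rightarrow> nat \<Rightarrow> (nat \<Rightarrow> real^'n) \<Rightarrow> (nat \<Rightarrow> real^'n) \<Rightarrow> (nat \<Rightarrow> real) \<Rightarrow> (nat \<Rightarrow> real) \<Rightarrow> bool"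
  where
  "DCB tau r Y Y' k d \<longleftrightarrow> dmas tau r Y Y' k d \<and> (\<exists>xb. complex_balanced r Y Y' k xb)"

text \<open>Positive diagonal matrix Q = diag(q) acting on a vector / on a history.\<close>
definition diag_app :: "real^'n \<Rightarrow> real^'n \<Rightarrow> real^'n" where
  "diag_app q v = (\<chi> j. q $ j * v $ j)"

definition pos_hist :: "real \<Rightarrow> (real \<Rightarrow> real^'n) \<Rightarrow> bool" where
  "pos_hist tau psi \<longleftrightarrow> continuous_on {-tau..0} psi \<and> (\<forall>s\<in>{-tau..0}. pos_vec (psi s))"

definition lin_conj ::
  "real \<Rightarrow> real^'n
   \<Rightarrow> nat \<Rightarrow> (nat \<Rightarrow> real^'n) \<Rightarrow> (nat \<Rightarrow> real^'n) \<Rightarrow> (nat \<Rightarrow> real) \<Rightarrow> (nat \<Rightarrow> real)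
   \<Rightarrow> nat \<Rightarrow> (nat \<Rightarrow> real^'n) \<Rightarrow> (nat \<Rightarrow> real^'n) \<Rightarrow> (nat \<Rightarrow> real) \<Rightarrow> (nat \<Rightarrow> real) \<Rightarrow> bool"
  where
  "lin_conj tau q r Y Y' k d r2 Y2 Y2' k2 d2 \<longleftrightarrow> pos_vec q \<and>
     (\<forall>psi. pos_hist tau psi \<longrightarrow>
        dmas_rhs r Y Y' k d (\<lambda>s. diag_app q (psi s)) = diag_app q (dmas_rhs r2 Y2 Y2' k2 d2 psi))"

definition lcDCB ::
  "real \<Rightarrow> nat \<Rightarrow> (nat \<Rightarrow> real^'n) \<Rightarrow> (nat \<Rightarrow> real^'n) \<Rightarrow> (nat \<Rightarrow> real) \<Rightarrow> (nat \<Rightarrow> real) \<Rightarrow> bool"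
  where
  "lcDCB tau r Y Y' k d \<longleftrightarrow> dmas tau r Y Y' k d \<and>
     (\<exists>q r2 Y2 Y2' k2 d2. DCB tau r2 Y2 Y2' k2 d2 \<and> lin_conj tau q r Y Y' k d r2 Y2 Y2' k2 d2)"

definition dmas_solution ::
  "real \<Rightarrow> nat \<Rightarrow> (nat \<Rightarrow> real^'n) \<Rightarrow> (nat \<Rightarrow> real^'n) \<Rightarrow> (nat \<Rightarrow> real) \<Rightarrow> (nat \<Rightarrow> real)
   \<Rightarrow> (real \<Rightarrow> real^'n) \<Rightarrow> ereal \<Rightarrow> (real \<Rightarrow> real^'n) \<Rightarrow> bool" where
  "dmas_solution tau r Y Y' k d theta T x \<longleftrightarrow>
     0 < T \<and>
     continuous_on {t. -tau \<le> t \<and> ereal t < T} x \<and>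
     (\<forall>s\<in>{-tau..0}. x s = theta s) \<and>
     (\<forall>t. -tau \<le> t \<and> ereal t < T \<longrightarrow> nonneg_vec (x t)) \<and>
     (\<forall>t. 0 \<le> t \<and> ereal t < T \<longrightarrow>
        (x has_vector_derivative dmas_rhs r Y Y' k d (\<lambda>s. x (t + s)))
          (at t within {t'. 0 \<le> t' \<and> ereal t' < T}))"

definition lyapunov_stable ::
  "real \<Rightarrow> nat \<Rightarrow> (nat \<Rightarrow> real^'n) \<Rightarrow> (nat \<Rightarrow> real^'n) \<Rightarrow> (nat \<Rightarrow> real) \<Rightarrow> (nat \<Rightarrow> real)
   \<Rightarrow> real^'n \<Rightarrow> bool" where
  "lyapunov_stable tau r Y Y' k d xs \<longleftrightarrow>
     (\<forall>\<epsilon>>0. \<exists>\<delta>>0. \<forall>theta T x.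
        pos_hist tau theta \<and> (\<forall>s\<in>{-tau..0}. norm (theta s - xs) < \<delta>) \<and>
        dmas_solution tau r Y Y' k d theta T x \<longrightarrow>
        (\<forall>t. 0 \<le> t \<and> ereal t < T \<longrightarrow> (\<forall>s\<in>{-tau..0}. norm (x (t + s) - xs) < \<epsilon>)))"

end

theory Submission
  imports Defs
begin

text \<open>
  Under the conjugacy \<open>x = Q z\<close>, solutions of the given system turn into functions that solve the
  complex balanced system as long as their history stays positive, and \<open>x*\<close> turns into a positive
  equilibrium \<open>c\<close> of that system, which by the Horn-Jackson argument is again complex balanced.
  With the relative entropy \<open>relent a b = b (ln b - ln a - 1) + a\<close> one uses the
  Lyapunov-Krasovskii functional
    \<open>V(t) = sum_j relent c_j z_j(t) + sum_i k_i integral_[t - d_i, t] relent (c^y_i) (z(s)^y_i) ds\<close>.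
  The Fenchel-Young inequality for \<open>relent\<close> bounds its derivative by
  \<open>sum_i k_i c^y_i (exp (y'_i . v) - exp (y_i . v))\<close> with \<open>v = ln z(t) - ln c\<close>, and this sum vanishes
  by complex balance, so \<open>V\<close> does not increase. Since \<open>V\<close> is small for histories close to \<open>c\<close> and
  dominates each \<open>relent c_j z_j(t)\<close>, such solutions cannot leave a small box around \<open>c\<close>, which in
  particular keeps them positive; undoing \<open>Q\<close> gives the stability of \<open>x*\<close>.
\<close>

section \<open>Relative entropy\<close>

definition relent :: "real \<Rightarrow> real \<Rightarrow> real" where
  "relent a b = b * (ln b - ln a - 1) + a"

lemma relent_self [simp]: "relent a a = 0"
  by (simp add: relent_def)

lemma relent_fenchel_young:
  assumes "0 < a" "0 < b"
  shows "b * L \<le> relent a b + a * (exp L - 1)"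
proof -
  define p where "p = L - (ln b - ln a)"
  have "b * (1 + p) \<le> b * exp p"
    using assms by (intro mult_left_mono exp_ge_add_one_self) auto
  also have "b * exp p = a * exp L"
    using assms by (simp add: p_def exp_diff)
  finally show ?thesis
    by (simp add: relent_def p_def algebra_simps)
qed

lemma relent_nonneg: "0 < a \<Longrightarrow> 0 < b \<Longrightarrow> 0 \<le> relent a b"
  using relent_fenchel_young[of a b 0] by simp

lemma relent_has_real_derivative:
  "0 < a \<Longrightarrow> 0 < b \<Longrightarrow> (relent a has_real_derivative ln b - ln a) (at b)"
  unfolding relent_def by (auto intro!: derivative_eq_intros simp: algebra_simps)

lemma relent_mono:
  assumes "0 < a" "a \<le> b" "b \<le> b'"
  shows "relent a b \<le> relent a b'"
  by (rule DERIV_nonneg_imp_nondecreasing[OF assms(3)])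
    (use assms in \<open>auto intro!: exI relent_has_real_derivative\<close>)

lemma relent_antimono:
  assumes "0 < b'" "b' \<le> b" "b \<le> a"
  shows "relent a b \<le> relent a b'"
  by (rule DERIV_nonpos_imp_nonincreasing[OF assms(2)])
    (use assms in \<open>auto intro!: exI relent_has_real_derivative\<close>)

lemma relent_pos:
  assumes "0 < a" "0 < b" "b \<noteq> a"
  shows "0 < relent a b"
proof -
  have "b * (ln a - ln b) < a - b"
    using ln_diff_less[of a b] assms by (simp add: field_simps)
  then show ?thesis
    by (simp add: relent_def algebra_simps)
qed

lemma abs_diff_less_of_relent_less:
  assumes "0 < \<rho>" "\<rho> < a" "0 < u"
    and "relent a u < min (relent a (a - \<rho>)) (relent a (a + \<rho>))"
  shows "\<bar>u - a\<bar> < \<rho>"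
proof (rule ccontr)
  assume "\<not> \<bar>u - a\<bar> < \<rho>"
  then consider "a + \<rho> \<le> u" | "u \<le> a - \<rho>"
    by linarith
  then show False
  proof cases
    case 1
    then have "relent a (a + \<rho>) \<le> relent a u"
      using assms by (intro relent_mono) auto
    with assms(4) show False
      by linarith
  next
    case 2
    then have "relent a (a - \<rho>) \<le> relent a u"
      using assms by (intro relent_antimono) auto
    with assms(4) show False
      by linarith
  qed
qed

lemma continuous_on_relent [continuous_intros]:
  assumes "continuous_on S f" "continuous_on S g" "\<And>s. s \<in> S \<Longrightarrow> 0 < f s \<and> 0 < g s"
  shows "continuous_on S (\<lambda>s. relent (f s) (g s))"
  unfolding relent_def using assms(1,2) by (intro continuous_intros) (fastforce dest: assms(3))+

section \<open>Monomials on the positive orthant\<close>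

definition ln_vec :: "real^'n \<Rightarrow> real^'n" where
  "ln_vec w = (\<chi> j. ln (w $ j))"

lemma mon_eq_exp_inner_ln_vec:
  assumes "pos_vec w"
  shows "mon w y = exp (y \<bullet> ln_vec w)"
proof -
  have "(if y $ j = 0 then 1 else w $ j powr y $ j) = exp (y $ j * ln (w $ j))" for j
    using assms by (simp add: pos_vec_def powr_def mult.commute less_imp_neq[symmetric])
  then show ?thesis
    by (simp add: mon_def ln_vec_def inner_vec_def exp_sum)
qed

lemma mon_pos: "pos_vec w \<Longrightarrow> 0 < mon w y"
  by (simp add: mon_eq_exp_inner_ln_vec)

lemma mon_rescale:
  "pos_vec w \<Longrightarrow> pos_vec c \<Longrightarrow> mon w y = mon c y * exp (y \<bullet> (ln_vec w - ln_vec c))"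
  by (simp add: mon_eq_exp_inner_ln_vec inner_diff_right flip: exp_add)

lemma relent_mon:
  assumes "pos_vec c" "pos_vec w"
  shows "relent (mon c y) (mon w y) = mon w y * (y \<bullet> (ln_vec w - ln_vec c)) - mon w y + mon c y"
  using assms by (simp add: relent_def mon_eq_exp_inner_ln_vec inner_diff_right algebra_simps)

lemma continuous_on_mon [continuous_intros]:
  assumes "continuous_on S f" "\<And>s. s \<in> S \<Longrightarrow> pos_vec (f s)"
  shows "continuous_on S (\<lambda>s. mon (f s) y)"
proof -
  have "continuous_on S (\<lambda>s. exp (y \<bullet> ln_vec (f s)))"
    using assms unfolding ln_vec_def inner_vec_def pos_vec_def
    by (intro continuous_intros) (auto simp: less_imp_neq[symmetric])
  then show ?thesis
    by (rule continuous_on_eq) (simp add: assms mon_eq_exp_inner_ln_vec)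
qed

section \<open>Complex balanced equilibria\<close>

lemma complex_balanced_sum:
  assumes "complex_balanced r Y Y' k xb"
  shows "(\<Sum>i<r. k i * mon xb (Y i) * \<Phi> (Y' i)) = (\<Sum>i<r. k i * mon xb (Y i) * \<Phi> (Y i))"
proof -
  define E where "E = Y ` {..<r} \<union> Y' ` {..<r}"
  define w where "w i = k i * mon xb (Y i)" for i
  have group: "(\<Sum>i<r. w i * \<Phi> (G i)) = (\<Sum>\<eta>\<in>E. \<Phi> \<eta> * (\<Sum>i\<in>{i. i < r \<and> G i = \<eta>}. w i))"
    if "G ` {..<r} \<subseteq> E" for G
  proof -
    have "(\<Sum>i<r. w i * \<Phi> (G i)) = (\<Sum>\<eta>\<in>E. \<Sum>i\<in>{i \<in> {..<r}. G i = \<eta>}. w i * \<Phi> (G i))"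
      by (rule sum.group[symmetric]) (use that in \<open>auto simp: E_def\<close>)
    also have "\<dots> = (\<Sum>\<eta>\<in>E. \<Phi> \<eta> * (\<Sum>i\<in>{i. i < r \<and> G i = \<eta>}. w i))"
      by (auto simp: sum_distrib_left mult.commute intro!: sum.cong)
    finally show ?thesis .
  qed
  have "(\<Sum>i<r. w i * \<Phi> (Y' i)) = (\<Sum>\<eta>\<in>E. \<Phi> \<eta> * (\<Sum>i\<in>{i. i < r \<and> Y' i = \<eta>}. w i))"
    by (rule group) (auto simp: E_def)
  also have "\<dots> = (\<Sum>\<eta>\<in>E. \<Phi> \<eta> * (\<Sum>i\<in>{i. i < r \<and> Y i = \<eta>}. w i))"
    using assms by (intro sum.cong) (auto simp: complex_balanced_def w_def E_def)
  also have "\<dots> = (\<Sum>i<r. w i * \<Phi> (Y i))"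
    by (rule group[symmetric]) (auto simp: E_def)
  finally show ?thesis
    by (simp add: w_def)
qed

lemma complex_balanced_log_difference_orthogonal:
  assumes cb: "complex_balanced r Y Y' k xb" and k: "\<forall>i<r. 0 < k i"
    and eq: "pos_equilibrium r Y Y' k c"
  shows "\<forall>i<r. Y i \<bullet> (ln_vec c - ln_vec xb) = Y' i \<bullet> (ln_vec c - ln_vec xb)"
proof -
  have pxb: "pos_vec xb" and pc: "pos_vec c"
    using cb eq by (auto simp: complex_balanced_def pos_equilibrium_def)
  define u where "u = ln_vec c - ln_vec xb"
  define a where "a i = Y i \<bullet> u" for i
  define b where "b i = Y' i \<bullet> u" for i
  define w where "w i = k i * mon xb (Y i)" for i
  have w: "0 < w i" if "i < r" for i
    using k that mon_pos[OF pxb] by (simp add: w_def)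
  have mon_c: "mon c (Y i) = mon xb (Y i) * exp (a i)" for i
    unfolding a_def u_def by (rule mon_rescale[OF pc pxb])
  have "0 = (\<Sum>i<r. (k i * mon c (Y i)) *\<^sub>R (Y' i - Y i)) \<bullet> u"
    using eq by (simp add: pos_equilibrium_def)
  also have "\<dots> = (\<Sum>i<r. w i * (exp (a i) * (b i - a i)))"
    by (simp add: inner_sum_left inner_diff_left mon_c w_def a_def b_def mult_ac)
  finally have flux: "(\<Sum>i<r. w i * (exp (a i) * (b i - a i))) = 0" ..
  have balance: "(\<Sum>i<r. w i * exp (b i)) = (\<Sum>i<r. w i * exp (a i))"
    using complex_balanced_sum[OF cb, of "\<lambda>\<eta>. exp (\<eta> \<bullet> u)"] by (simp add: w_def a_def b_def)
  \<comment> \<open>Together the two identities say that a sum of nonnegative terms vanishes.\<close>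
  have "(\<Sum>i<r. w i * relent (exp (b i)) (exp (a i))) = 0"
    using flux balance by (simp add: relent_def algebra_simps sum.distrib sum_subtractf)
  then have "w i * relent (exp (b i)) (exp (a i)) = 0" if "i < r" for i
    using that w by (subst (asm) sum_nonneg_eq_0_iff)
      (auto simp: less_imp_le intro!: mult_nonneg_nonneg relent_nonneg)
  then have "exp (a i) = exp (b i)" if "i < r" for i
    using that w[OF that] relent_pos[of "exp (b i)" "exp (a i)"] by fastforce
  then show ?thesis
    by (simp add: a_def b_def u_def)
qed

lemma complex_balanced_pos_equilibrium:
  assumes cb: "complex_balanced r Y Y' k xb" and k: "\<forall>i<r. 0 < k i"
    and eq: "pos_equilibrium r Y Y' k c"
  shows "complex_balanced r Y Y' k c"
proof -
  have pxb: "pos_vec xb" and pc: "pos_vec c"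
    using cb eq by (auto simp: complex_balanced_def pos_equilibrium_def)
  define u where "u = ln_vec c - ln_vec xb"
  have orth: "Y i \<bullet> u = Y' i \<bullet> u" if "i < r" for i
    using complex_balanced_log_difference_orthogonal[OF cb k eq] that by (simp add: u_def)
  have "(\<Sum>i\<in>{i. i < r \<and> Y i = \<eta>}. k i * mon c (Y i)) =
        (\<Sum>i\<in>{i. i < r \<and> Y' i = \<eta>}. k i * mon c (Y i))"
    if "\<eta> \<in> Y ` {..<r} \<union> Y' ` {..<r}" for \<eta>
  proof -
    have rescale: "(\<Sum>i\<in>{i. i < r \<and> G i = \<eta>}. k i * mon c (Y i)) =
          exp (\<eta> \<bullet> u) * (\<Sum>i\<in>{i. i < r \<and> G i = \<eta>}. k i * mon xb (Y i))"
      if "G = Y \<or> G = Y'" for G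
      using that orth
      by (auto simp: sum_distrib_left mon_rescale[OF pc pxb] u_def intro!: sum.cong)
    show ?thesis
      using cb \<open>\<eta> \<in> _\<close> rescale[of Y] rescale[of Y'] unfolding complex_balanced_def
      by (metis (no_types, lifting))
  qed
  then show ?thesis
    using pc by (simp add: complex_balanced_def)
qed

lemma complex_balanced_dissipation_nonpos:
  assumes cb: "complex_balanced r Y Y' k c" and k: "\<forall>i<r. 0 \<le> k i"
    and pw: "pos_vec w" and pu: "\<forall>i<r. pos_vec (u i)"
  shows "(ln_vec w - ln_vec c) \<bullet> (\<Sum>i<r. k i *\<^sub>R (mon (u i) (Y i) *\<^sub>R Y' i - mon w (Y i) *\<^sub>R Y i))
       + (\<Sum>i<r. k i * (relent (mon c (Y i)) (mon w (Y i)) - relent (mon c (Y i)) (mon (u i) (Y i))))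
       \<le> 0"
proof -
  have pc: "pos_vec c"
    using cb by (simp add: complex_balanced_def)
  define v where "v = ln_vec w - ln_vec c"
  have "(ln_vec w - ln_vec c) \<bullet> (\<Sum>i<r. k i *\<^sub>R (mon (u i) (Y i) *\<^sub>R Y' i - mon w (Y i) *\<^sub>R Y i))
       + (\<Sum>i<r. k i * (relent (mon c (Y i)) (mon w (Y i)) - relent (mon c (Y i)) (mon (u i) (Y i))))
      = (\<Sum>i<r. k i * (mon (u i) (Y i) * (Y' i \<bullet> v) - relent (mon c (Y i)) (mon (u i) (Y i))
                        - mon w (Y i) + mon c (Y i)))"
    by (simp add: inner_sum_right inner_diff_right relent_mon[OF pc pw] v_def inner_commute
        algebra_simps sum.distrib[symmetric])
  also have "\<dots> \<le> (\<Sum>i<r. k i * (mon c (Y i) * exp (Y' i \<bullet> v) - mon c (Y i) * exp (Y i \<bullet> v)))"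
  proof (rule sum_mono)
    fix i assume "i \<in> {..<r}"
    then have "mon (u i) (Y i) * (Y' i \<bullet> v)
        \<le> relent (mon c (Y i)) (mon (u i) (Y i)) + mon c (Y i) * (exp (Y' i \<bullet> v) - 1)"
      using pu pc by (intro relent_fenchel_young mon_pos) auto
    moreover have "mon w (Y i) = mon c (Y i) * exp (Y i \<bullet> v)"
      unfolding v_def by (rule mon_rescale[OF pw pc])
    ultimately show "k i * (mon (u i) (Y i) * (Y' i \<bullet> v) - relent (mon c (Y i)) (mon (u i) (Y i))
                        - mon w (Y i) + mon c (Y i))
        \<le> k i * (mon c (Y i) * exp (Y' i \<bullet> v) - mon c (Y i) * exp (Y i \<bullet> v))"
      using k \<open>i \<in> {..<r}\<close> by (intro mult_left_mono) (auto simp: algebra_simps)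
  qed
  also have "\<dots> = 0"
    using complex_balanced_sum[OF cb, of "\<lambda>\<eta>. exp (\<eta> \<bullet> v)"]
    by (simp add: right_diff_distrib sum_subtractf mult.assoc)
  finally show ?thesis .
qed

section \<open>The Lyapunov-Krasovskii functional\<close>

lemma integral_window_has_real_derivative:
  fixes H :: "real \<Rightarrow> real"
  assumes H: "continuous_on {a..b} H" and "0 \<le> \<delta>" and t: "t \<in> {a + \<delta>..b}"
  shows "((\<lambda>x. integral {x - \<delta>..x} H) has_real_derivative H t - H (t - \<delta>)) (at t within {a + \<delta>..b})"
proof -
  have upper: "((\<lambda>x. integral {a..x} H) has_real_derivative H x) (at x within {a..b})"
    if "x \<in> {a..b}" for x
    by (rule integral_has_real_derivative[OF H that])
  have lower: "((\<lambda>x. integral {a..x} H) \<circ> (\<lambda>x. x - \<delta>) has_real_derivative H (t - \<delta>) * 1)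
      (at t within {a + \<delta>..b})"
    by (rule DERIV_image_chain[OF DERIV_subset[OF upper]])
      (use assms in \<open>auto intro!: derivative_eq_intros\<close>)
  have difference: "((\<lambda>x. integral {a..x} H - integral {a..x - \<delta>} H) has_real_derivative H t - H (t - \<delta>))
      (at t within {a + \<delta>..b})"
    using DERIV_diff[OF DERIV_subset[OF upper[of t]] lower] assms by (simp add: o_def)
  have window: "integral {a..x} H - integral {a..x - \<delta>} H = integral {x - \<delta>..x} H"
    if "x \<in> {a + \<delta>..b}" for x
  proof -
    have "H integrable_on {a..x}"
      using that by (intro integrable_continuous_real continuous_on_subset[OF H]) auto
    then have "integral {a..x - \<delta>} H + integral {x - \<delta>..x} H = integral {a..x} H"
      using that \<open>0 \<le> \<delta>\<close> by (intro Henstock_Kurzweil_Integration.integral_combine) auto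
    then show ?thesis
      by linarith
  qed
  show ?thesis
    by (rule has_field_derivative_transform_within[OF difference zero_less_one t]) (simp add: window)
qed

definition dcb_lyapunov ::
  "nat \<Rightarrow> (nat \<Rightarrow> real^'n) \<Rightarrow> (nat \<Rightarrow> real) \<Rightarrow> (nat \<Rightarrow> real) \<Rightarrow> real^'n \<Rightarrow> (real \<Rightarrow> real^'n)
   \<Rightarrow> real \<Rightarrow> real" where
  "dcb_lyapunov r Y k d c z t = (\<Sum>j\<in>UNIV. relent (c $ j) (z t $ j)) +
     (\<Sum>i<r. k i * integral {t - d i..t} (\<lambda>s. relent (mon c (Y i)) (mon (z s) (Y i))))"

lemma dcb_lyapunov_has_real_derivative:
  assumes "0 \<le> tau" and pc: "pos_vec c" and d: "\<forall>i<r. 0 \<le> d i \<and> d i \<le> tau"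
    and zc: "continuous_on {-tau..b} z" and zpos: "\<forall>s\<in>{-tau..b}. pos_vec (z s)"
    and t: "t \<in> {0..b}"
    and zd: "(z has_vector_derivative dmas_rhs r Y Y' k d (\<lambda>s. z (t + s))) (at t within {0..b})"
  shows "(dcb_lyapunov r Y k d c z has_real_derivative
            (ln_vec (z t) - ln_vec c) \<bullet> dmas_rhs r Y Y' k d (\<lambda>s. z (t + s))
          + (\<Sum>i<r. k i * (relent (mon c (Y i)) (mon (z t) (Y i))
                           - relent (mon c (Y i)) (mon (z (t - d i)) (Y i)))))
         (at t within {0..b})"
proof -
  define F where "F = dmas_rhs r Y Y' k d (\<lambda>s. z (t + s))"
  define H where "H i s = relent (mon c (Y i)) (mon (z s) (Y i))" for i s
  have pos: "0 < z t $ j" "0 < c $ j" for j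
    using zpos t pc \<open>0 \<le> tau\<close> by (auto simp: pos_vec_def)
  have coord: "((\<lambda>s. z s $ j) has_real_derivative F $ j) (at t within {0..b})" for j
    using bounded_linear.has_vector_derivative[OF bounded_linear_vec_nth zd]
    by (simp add: F_def has_real_derivative_iff_has_vector_derivative)
  have "((\<lambda>s. \<Sum>j\<in>UNIV. relent (c $ j) (z s $ j)) has_real_derivative
      (\<Sum>j\<in>UNIV. (ln (z t $ j) - ln (c $ j)) * F $ j)) (at t within {0..b})"
    using DERIV_chain2[OF relent_has_real_derivative coord] pos by (intro DERIV_sum) simp
  moreover have "(\<Sum>j\<in>UNIV. (ln (z t $ j) - ln (c $ j)) * F $ j) = (ln_vec (z t) - ln_vec c) \<bullet> F"
    by (simp add: inner_vec_def ln_vec_def)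
  ultimately have entropy: "((\<lambda>s. \<Sum>j\<in>UNIV. relent (c $ j) (z s $ j)) has_real_derivative
      (ln_vec (z t) - ln_vec c) \<bullet> F) (at t within {0..b})"
    by simp
  have "continuous_on {-tau..b} (H i)" for i
    unfolding H_def using zc zpos pc by (intro continuous_intros) (auto intro: mon_pos)
  then have window: "((\<lambda>s. integral {s - d i..s} (H i)) has_real_derivative H i t - H i (t - d i))
      (at t within {0..b})" if "i < r" for i
    using that d t
    by (intro DERIV_subset[OF integral_window_has_real_derivative[of "-tau" b]]) auto
  show ?thesis
    unfolding dcb_lyapunov_def F_def[symmetric] H_def[symmetric]
    by (intro DERIV_add entropy DERIV_sum DERIV_cmult window) (simp add: right_diff_distrib)
qed

lemma dcb_lyapunov_nonincreasing:
  assumes "0 \<le> tau" and cb: "complex_balanced r Y Y' k c"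
    and kd: "\<forall>i<r. 0 \<le> k i \<and> 0 \<le> d i \<and> d i \<le> tau" and "0 \<le> b"
    and zc: "continuous_on {-tau..b} z" and zpos: "\<forall>s\<in>{-tau..b}. pos_vec (z s)"
    and zd: "\<And>t. t \<in> {0..b} \<Longrightarrow>
       (z has_vector_derivative dmas_rhs r Y Y' k d (\<lambda>s. z (t + s))) (at t within {0..b})"
  shows "dcb_lyapunov r Y k d c z b \<le> dcb_lyapunov r Y k d c z 0"
proof -
  have pc: "pos_vec c"
    using cb by (simp add: complex_balanced_def)
  define D where "D t = (ln_vec (z t) - ln_vec c) \<bullet> dmas_rhs r Y Y' k d (\<lambda>s. z (t + s))
     + (\<Sum>i<r. k i * (relent (mon c (Y i)) (mon (z t) (Y i)) - relent (mon c (Y i)) (mon (z (t - d i)) (Y i))))"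
    for t
  have deriv: "(dcb_lyapunov r Y k d c z has_real_derivative D t) (at t within {0..b})"
    if "t \<in> {0..b}" for t
    unfolding D_def using kd
    by (intro dcb_lyapunov_has_real_derivative[OF \<open>0 \<le> tau\<close> pc _ zc zpos that zd[OF that]]) auto
  have nonpos: "D t \<le> 0" if "t \<in> {0..b}" for t
  proof -
    have "pos_vec (z t)"
      using that zpos \<open>0 \<le> tau\<close> by simp
    moreover have "pos_vec (z (t - d i))" if "i < r" for i
    proof -
      have "t - d i \<in> {-tau..b}"
        using \<open>t \<in> {0..b}\<close> kd[rule_format, OF \<open>i < r\<close>] by simp
      then show ?thesis
        using zpos by blast
    qed
    ultimately show ?thesis
      unfolding D_def dmas_rhs_def add_uminus_conv_diff add_0_right using kd
      by (intro complex_balanced_dissipation_nonpos[OF cb]) blast+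
  qed
  have "\<exists>y. (dcb_lyapunov r Y k d c z has_real_derivative y) (at t) \<and> y \<le> 0"
    if "0 < t" "t < b" for t
  proof -
    have "at t within {0..b} = at t"
      using that by (intro at_within_interior) simp
    then show ?thesis
      using deriv[of t] nonpos[of t] that by auto
  qed
  then show ?thesis
    by (rule DERIV_nonpos_imp_decreasing_open[OF \<open>0 \<le> b\<close> _ DERIV_continuous_on[OF deriv]])
qed

lemma relent_le_dcb_lyapunov:
  assumes "0 \<le> tau" and pc: "pos_vec c" and kd: "\<forall>i<r. 0 \<le> k i \<and> 0 \<le> d i \<and> d i \<le> tau"
    and "0 \<le> b" and zc: "continuous_on {-tau..b} z" and zpos: "\<forall>s\<in>{-tau..b}. pos_vec (z s)"
  shows "relent (c $ j) (z b $ j) \<le> dcb_lyapunov r Y k d c z b"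
proof -
  have pos: "0 < c $ j" "0 < z b $ j" for j
    using pc zpos \<open>0 \<le> tau\<close> \<open>0 \<le> b\<close> by (auto simp: pos_vec_def)
  have "relent (c $ j) (z b $ j) \<le> (\<Sum>j\<in>UNIV. relent (c $ j) (z b $ j))"
    by (rule member_le_sum) (auto intro: relent_nonneg pos)
  moreover have "0 \<le> integral {b - d i..b} (\<lambda>s. relent (mon c (Y i)) (mon (z s) (Y i)))"
    if "i < r" for i
  proof -
    have sub: "{b - d i..b} \<subseteq> {-tau..b}"
      using kd that \<open>0 \<le> b\<close> by auto
    show ?thesis
      using zpos pc sub
      by (intro Henstock_Kurzweil_Integration.integral_nonneg integrable_continuous_real
          continuous_intros continuous_on_subset[OF zc sub])
        (auto intro!: relent_nonneg mon_pos)
  qed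
  then have "0 \<le> (\<Sum>i<r. k i * integral {b - d i..b} (\<lambda>s. relent (mon c (Y i)) (mon (z s) (Y i))))"
    using kd by (intro sum_nonneg) auto
  ultimately show ?thesis
    by (simp add: dcb_lyapunov_def)
qed

lemma dcb_lyapunov_0_le:
  assumes "0 \<le> tau" and pc: "pos_vec c" and kd: "\<forall>i<r. 0 \<le> k i \<and> 0 \<le> d i \<and> d i \<le> tau"
    and zc: "continuous_on {-tau..0} z" and zpos: "\<forall>s\<in>{-tau..0}. pos_vec (z s)" and "0 \<le> \<beta>"
    and small: "\<forall>s\<in>{-tau..0}. \<forall>i<r. relent (mon c (Y i)) (mon (z s) (Y i)) \<le> \<beta>"
  shows "dcb_lyapunov r Y k d c z 0 \<le> (\<Sum>j\<in>UNIV. relent (c $ j) (z 0 $ j)) + tau * (\<Sum>i<r. k i) * \<beta>"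
proof -
  have "integral {- d i..0} (\<lambda>s. relent (mon c (Y i)) (mon (z s) (Y i))) \<le> tau * \<beta>" if "i < r" for i
  proof -
    have sub: "{- d i..0} \<subseteq> {-tau..0}"
      using kd that by auto
    have "integral {- d i..0} (\<lambda>s. relent (mon c (Y i)) (mon (z s) (Y i))) \<le> integral {- d i..0} (\<lambda>_. \<beta>)"
      using zpos pc sub small that
      by (intro Henstock_Kurzweil_Integration.integral_le integrable_continuous_real
          continuous_intros continuous_on_subset[OF zc sub])
        (auto intro!: mon_pos)
    also have "\<dots> \<le> tau * \<beta>"
      using kd that \<open>0 \<le> \<beta>\<close> by (auto intro: mult_right_mono)
    finally show ?thesis .
  qed
  then have "(\<Sum>i<r. k i * integral {0 - d i..0} (\<lambda>s. relent (mon c (Y i)) (mon (z s) (Y i))))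
      \<le> (\<Sum>i<r. k i * (tau * \<beta>))"
    using kd by (intro sum_mono mult_left_mono) auto
  also have "\<dots> = tau * (\<Sum>i<r. k i) * \<beta>"
    by (simp add: sum_distrib_left sum_distrib_right mult_ac)
  finally show ?thesis
    by (simp add: dcb_lyapunov_def)
qed

section \<open>Stability of complex balanced equilibria\<close>

lemma continuous_on_interval_stays_in_open:
  fixes f :: "real \<Rightarrow> 'a::topological_space"
  assumes f: "continuous_on {a..b} f" and "open U" and "f a \<in> U"
    and step: "\<And>t. a < t \<Longrightarrow> t \<le> b \<Longrightarrow> f ` {a..t} \<subseteq> closure U \<Longrightarrow> f t \<in> U"
  shows "f ` {a..b} \<subseteq> U"
proof (rule ccontr)
  define F where "F = {a..b} \<inter> f -` (- U)"
  assume "\<not> f ` {a..b} \<subseteq> U"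
  then have "F \<noteq> {}"
    by (auto simp: F_def)
  moreover have "closed F"
    unfolding F_def using \<open>open U\<close> by (intro continuous_closed_preimage f) auto
  moreover have "bdd_below F"
    by (auto simp: F_def intro: bdd_belowI[of _ a])
  ultimately have "Inf F \<in> F"
    by (intro closed_contains_Inf)
  define t where "t = Inf F"
  have t: "a < t" "t \<le> b" "f t \<notin> U"
    using \<open>Inf F \<in> F\<close> \<open>f a \<in> U\<close> by (auto simp: t_def F_def order.order_iff_strict)
  have "f ` {a..<t} \<subseteq> U"
  proof
    fix y assume "y \<in> f ` {a..<t}"
    then obtain s where s: "s \<in> {a..<t}" "y = f s"
      by blast
    have "s \<notin> F"
      using s cInf_lower[OF _ \<open>bdd_below F\<close>, of s] by (force simp: t_def)
    then show "y \<in> U"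
      using s t by (simp add: F_def)
  qed
  then have "f ` closure {a..<t} \<subseteq> closure U"
    using closure_subset
    by (intro image_closure_subset) (use t in \<open>auto intro!: continuous_on_subset[OF f]\<close>)
  then have "f t \<in> U"
    using t by (intro step) auto
  with t show False
    by simp
qed

lemma open_coordinate_box: "open {w::real^'n. \<forall>j. \<bar>w $ j - c $ j\<bar> < \<rho>}"
proof -
  have "{w::real^'n. \<forall>j. \<bar>w $ j - c $ j\<bar> < \<rho>} = (\<Inter>j. {w. \<bar>w $ j - c $ j\<bar> < \<rho>})"
    by auto
  then show ?thesis
    by (auto intro!: open_INT open_Collect_less continuous_intros)
qed

lemma pos_vec_closure_coordinate_box:
  assumes "w \<in> closure {w. \<forall>j. \<bar>w $ j - c $ j\<bar> < \<rho>}" and \<rho>: "\<forall>j. \<rho> < c $ j"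
  shows "pos_vec w"
proof -
  have "closure {w. \<forall>j. \<bar>w $ j - c $ j\<bar> < \<rho>} \<subseteq> {w. \<forall>j. \<bar>w $ j - c $ j\<bar> \<le> \<rho>}"
    by (intro closure_minimal closed_Collect_all closed_Collect_le continuous_intros)
      (auto simp: less_imp_le)
  then have "\<bar>w $ j - c $ j\<bar> \<le> \<rho>" for j
    using assms(1) by blast
  then show ?thesis
    using \<rho> unfolding pos_vec_def by (smt (verit))
qed

lemma coordinate_box_in_ball:
  fixes c :: "real^'n"
  assumes "pos_vec c" "0 < \<epsilon>"
  obtains \<rho> where "0 < \<rho>" "\<forall>j. \<rho> < c $ j" "\<And>w. \<forall>j. \<bar>w $ j - c $ j\<bar> < \<rho> \<Longrightarrow> norm (w - c) < \<epsilon>"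
proof
  define \<rho> where "\<rho> = min (Min (range (\<lambda>j. c $ j)) / 2) (\<epsilon> / CARD('n))"
  have c: "0 < c $ j" for j
    using assms by (simp add: pos_vec_def)
  then show "0 < \<rho>"
    using \<open>0 < \<epsilon>\<close> by (simp add: \<rho>_def)
  have "\<rho> \<le> Min (range (\<lambda>j. c $ j)) / 2"
    unfolding \<rho>_def by (rule min.cobounded1)
  moreover have "Min (range (\<lambda>j. c $ j)) \<le> c $ j" for j
    by (rule Min_le) auto
  ultimately have half: "\<rho> \<le> c $ j / 2" for j
    by (meson divide_right_mono order.trans zero_le_numeral)
  show "\<forall>j. \<rho> < c $ j"
  proof
    fix j
    show "\<rho> < c $ j"
      using half[of j] c[of j] by linarith
  qed
  fix w assume "\<forall>j. \<bar>w $ j - c $ j\<bar> < \<rho>"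
  then have "norm (w - c) < CARD('n) * \<rho>"
    using norm_le_l1_cart[of "w - c"] sum_strict_mono[of UNIV "\<lambda>j. \<bar>(w - c) $ j\<bar>" "\<lambda>j. \<rho>"]
    by simp
  also have "\<dots> \<le> CARD('n) * (\<epsilon> / CARD('n))"
    unfolding \<rho>_def by (intro mult_left_mono min.cobounded2) auto
  also have "\<dots> = \<epsilon>"
    by simp
  finally show "norm (w - c) < \<epsilon>" .
qed

lemma relent_sublevel_in_box:
  assumes pc: "pos_vec c" and "0 < \<rho>" and \<rho>: "\<forall>j. \<rho> < c $ j"
  obtains \<eta> where "0 < \<eta>"
    and "\<And>w. pos_vec w \<Longrightarrow> \<forall>j. relent (c $ j) (w $ j) < \<eta> \<Longrightarrow> \<forall>j. \<bar>w $ j - c $ j\<bar> < \<rho>"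
proof
  define \<eta> where "\<eta> = Min (range (\<lambda>j. min (relent (c $ j) (c $ j - \<rho>)) (relent (c $ j) (c $ j + \<rho>))))"
  show "0 < \<eta>"
    using \<rho> \<open>0 < \<rho>\<close> pc by (auto simp: \<eta>_def Min_gr_iff pos_vec_def add_pos_pos intro!: relent_pos)
  fix w
  assume w: "pos_vec w" "\<forall>j. relent (c $ j) (w $ j) < \<eta>"
  show "\<forall>j. \<bar>w $ j - c $ j\<bar> < \<rho>"
  proof
    fix j
    have "\<eta> \<le> min (relent (c $ j) (c $ j - \<rho>)) (relent (c $ j) (c $ j + \<rho>))"
      unfolding \<eta>_def by (rule Min_le) auto
    with w have "relent (c $ j) (w $ j) < min (relent (c $ j) (c $ j - \<rho>)) (relent (c $ j) (c $ j + \<rho>))"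
      by (meson order.strict_trans2)
    then show "\<bar>w $ j - c $ j\<bar> < \<rho>"
      using w \<rho> \<open>0 < \<rho>\<close> by (intro abs_diff_less_of_relent_less) (auto simp: pos_vec_def)
  qed
qed

lemma tendsto_mon:
  assumes "pos_vec c"
  shows "((\<lambda>w. mon w y) \<longlongrightarrow> mon c y) (nhds c)"
proof -
  have nz: "c $ j \<noteq> 0" for j
    using assms by (simp add: pos_vec_def less_imp_neq[symmetric])
  have "\<forall>\<^sub>F w in nhds c. pos_vec w"
    unfolding pos_vec_def
  proof (rule eventually_all_finite)
    fix j
    have "((\<lambda>w. w $ j) \<longlongrightarrow> c $ j) (nhds c)"
      by (intro tendsto_intros filterlim_ident)
    then show "\<forall>\<^sub>F w in nhds c. 0 < w $ j"
      using assms by (intro order_tendstoD(1)) (auto simp: pos_vec_def)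
  qed
  then have "\<forall>\<^sub>F w in nhds c. exp (y \<bullet> ln_vec w) = mon w y"
    by eventually_elim (simp add: mon_eq_exp_inner_ln_vec)
  moreover have "((\<lambda>w. exp (y \<bullet> ln_vec w)) \<longlongrightarrow> exp (y \<bullet> ln_vec c)) (nhds c)"
    unfolding ln_vec_def inner_vec_def by (intro tendsto_intros filterlim_ident nz)
  ultimately show ?thesis
    using assms by (simp add: Lim_transform_eventually mon_eq_exp_inner_ln_vec)
qed

lemma eventually_relent_small:
  fixes Y :: "nat \<Rightarrow> real^'n"
  assumes pc: "pos_vec c" and "0 < \<gamma>"
  shows "\<forall>\<^sub>F w in nhds c. (\<Sum>j\<in>UNIV. relent (c $ j) (w $ j)) < \<gamma> \<and>
                          (\<forall>i<r. relent (mon c (Y i)) (mon w (Y i)) < \<gamma>)"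
proof -
  have nz: "c $ j \<noteq> 0" for j
    using pc by (simp add: pos_vec_def less_imp_neq[symmetric])
  have "((\<lambda>w. \<Sum>j\<in>UNIV. relent (c $ j) (w $ j)) \<longlongrightarrow> (\<Sum>j\<in>UNIV. relent (c $ j) (c $ j))) (nhds c)"
    unfolding relent_def by (intro tendsto_intros filterlim_ident nz)
  then have entropy: "\<forall>\<^sub>F w in nhds c. (\<Sum>j\<in>UNIV. relent (c $ j) (w $ j)) < \<gamma>"
    using \<open>0 < \<gamma>\<close> by (intro order_tendstoD(2)) auto
  have "((\<lambda>w. relent (mon c y) (mon w y)) \<longlongrightarrow> relent (mon c y) (mon c y)) (nhds c)" for y
    unfolding relent_def using mon_pos[OF pc, of y]
    by (intro tendsto_intros tendsto_mon[OF pc]) auto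
  then have "\<forall>\<^sub>F w in nhds c. relent (mon c y) (mon w y) < \<gamma>" for y
    using \<open>0 < \<gamma>\<close> by (intro order_tendstoD(2)) auto
  then have "\<forall>\<^sub>F w in nhds c. \<forall>i\<in>{..<r}. relent (mon c (Y i)) (mon w (Y i)) < \<gamma>"
    by (intro eventually_ball_finite) auto
  from eventually_conj[OF entropy this] show ?thesis
    by (rule eventually_mono) simp
qed

lemma relent_bound_along_solution:
  assumes "0 \<le> tau" and cb: "complex_balanced r Y Y' k c"
    and kd: "\<forall>i<r. 0 \<le> k i \<and> 0 \<le> d i \<and> d i \<le> tau" and "0 \<le> b"
    and zc: "continuous_on {-tau..b} z" and zpos: "\<forall>s\<in>{-tau..b}. pos_vec (z s)"
    and zd: "\<And>t. t \<in> {0..b} \<Longrightarrow>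
       (z has_vector_derivative dmas_rhs r Y Y' k d (\<lambda>s. z (t + s))) (at t within {0..b})"
    and init: "\<forall>s\<in>{-tau..0}. (\<Sum>j\<in>UNIV. relent (c $ j) (z s $ j)) < \<gamma> \<and>
                               (\<forall>i<r. relent (mon c (Y i)) (mon (z s) (Y i)) < \<gamma>)"
  shows "relent (c $ j) (z b $ j) < \<gamma> * (1 + tau * (\<Sum>i<r. k i))"
proof -
  have pc: "pos_vec c"
    using cb by (simp add: complex_balanced_def)
  have "0 \<le> (\<Sum>j\<in>UNIV. relent (c $ j) (z 0 $ j))"
    using pc zpos \<open>0 \<le> tau\<close> \<open>0 \<le> b\<close> by (intro sum_nonneg relent_nonneg) (auto simp: pos_vec_def)
  moreover have "(\<Sum>j\<in>UNIV. relent (c $ j) (z 0 $ j)) < \<gamma>"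
    using init \<open>0 \<le> tau\<close> by simp
  ultimately have "0 \<le> \<gamma>"
    by linarith
  have "relent (c $ j) (z b $ j) \<le> dcb_lyapunov r Y k d c z b"
    using assms pc by (intro relent_le_dcb_lyapunov) auto
  also have "\<dots> \<le> dcb_lyapunov r Y k d c z 0"
    by (rule dcb_lyapunov_nonincreasing[OF \<open>0 \<le> tau\<close> cb kd \<open>0 \<le> b\<close> zc zpos zd])
  also have "\<dots> \<le> (\<Sum>j\<in>UNIV. relent (c $ j) (z 0 $ j)) + tau * (\<Sum>i<r. k i) * \<gamma>"
    using init zpos \<open>0 \<le> b\<close> \<open>0 \<le> \<gamma>\<close>
    by (intro dcb_lyapunov_0_le[OF \<open>0 \<le> tau\<close> pc kd continuous_on_subset[OF zc]])
      (auto simp: less_imp_le)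
  also have "\<dots> < \<gamma> * (1 + tau * (\<Sum>i<r. k i))"
    using init \<open>0 \<le> tau\<close> by (simp add: algebra_simps)
  finally show ?thesis .
qed

text \<open>The equation is only required while the history stays positive, because \<open>lin_conj\<close> relates
  the two right-hand sides on positive histories only.\<close>
definition stable_while_positive ::
  "real \<Rightarrow> nat \<Rightarrow> (nat \<Rightarrow> real^'n) \<Rightarrow> (nat \<Rightarrow> real^'n) \<Rightarrow> (nat \<Rightarrow> real) \<Rightarrow> (nat \<Rightarrow> real)
   \<Rightarrow> real^'n \<Rightarrow> bool" where
  "stable_while_positive tau r Y Y' k d c \<longleftrightarrow>
     (\<forall>\<epsilon>>0. \<exists>\<delta>>0. \<forall>z b.
        continuous_on {-tau..b} z \<and> (\<forall>s\<in>{-tau..0}. norm (z s - c) < \<delta>) \<and>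
        (\<forall>t\<in>{0..b}. (\<forall>s\<in>{-tau..t}. pos_vec (z s)) \<longrightarrow>
           (z has_vector_derivative dmas_rhs r Y Y' k d (\<lambda>s. z (t + s))) (at t within {0..b}))
        \<longrightarrow> (\<forall>s\<in>{-tau..b}. norm (z s - c) < \<epsilon>))"

lemma complex_balanced_stable_while_positive:
  fixes Y Y' :: "nat \<Rightarrow> real^'n"
  assumes "0 \<le> tau" and cb: "complex_balanced r Y Y' k c"
    and kd: "\<forall>i<r. 0 \<le> k i \<and> 0 \<le> d i \<and> d i \<le> tau"
  shows "stable_while_positive tau r Y Y' k d c"
  unfolding stable_while_positive_def
proof (intro allI impI)
  fix \<epsilon> :: real
  assume "0 < \<epsilon>"
  have pc: "pos_vec c"
    using cb by (simp add: complex_balanced_def)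
  obtain \<rho> where "0 < \<rho>" and \<rho>: "\<forall>j. \<rho> < c $ j"
    and close: "\<And>w. \<forall>j. \<bar>w $ j - c $ j\<bar> < \<rho> \<Longrightarrow> norm (w - c) < \<epsilon>"
    using coordinate_box_in_ball[OF pc \<open>0 < \<epsilon>\<close>] by blast
  define U where "U = {w. \<forall>j. \<bar>w $ j - c $ j\<bar> < \<rho>}"
  have "open U"
    unfolding U_def by (rule open_coordinate_box)
  have pos_closure: "pos_vec w" if "w \<in> closure U" for w
    using that \<rho> unfolding U_def by (rule pos_vec_closure_coordinate_box)
  obtain \<eta> where "0 < \<eta>"
    and \<eta>: "\<And>w. pos_vec w \<Longrightarrow> \<forall>j. relent (c $ j) (w $ j) < \<eta> \<Longrightarrow> \<forall>j. \<bar>w $ j - c $ j\<bar> < \<rho>"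
    using relent_sublevel_in_box[OF pc \<open>0 < \<rho>\<close> \<rho>] by metis
  have sublevel: "w \<in> U" if "pos_vec w" "\<forall>j. relent (c $ j) (w $ j) < \<eta>" for w
    using \<eta>[OF that] by (simp add: U_def)
  define \<gamma> where "\<gamma> = \<eta> / (1 + tau * (\<Sum>i<r. k i))"
  have "0 \<le> tau * (\<Sum>i<r. k i)"
    using \<open>0 \<le> tau\<close> kd by (intro mult_nonneg_nonneg sum_nonneg) auto
  then have "0 < \<gamma>" and \<gamma>: "\<gamma> * (1 + tau * (\<Sum>i<r. k i)) = \<eta>"
    using \<open>0 < \<eta>\<close> by (auto simp: \<gamma>_def)
  have "\<forall>\<^sub>F w in nhds c. w \<in> U"
    using \<open>open U\<close> \<open>0 < \<rho>\<close> by (intro eventually_nhds_in_open) (auto simp: U_def)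
  from eventually_conj[OF this eventually_relent_small[OF pc \<open>0 < \<gamma>\<close>]]
  obtain \<delta> where "0 < \<delta>" and near: "\<And>w. dist w c < \<delta> \<Longrightarrow> w \<in> U \<and>
      (\<Sum>j\<in>UNIV. relent (c $ j) (w $ j)) < \<gamma> \<and> (\<forall>i<r. relent (mon c (Y i)) (mon w (Y i)) < \<gamma>)"
    unfolding eventually_nhds_metric by blast
  show "\<exists>\<delta>>0. \<forall>z b. continuous_on {-tau..b} z \<and> (\<forall>s\<in>{-tau..0}. norm (z s - c) < \<delta>) \<and>
        (\<forall>t\<in>{0..b}. (\<forall>s\<in>{-tau..t}. pos_vec (z s)) \<longrightarrow>
           (z has_vector_derivative dmas_rhs r Y Y' k d (\<lambda>s. z (t + s))) (at t within {0..b}))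
        \<longrightarrow> (\<forall>s\<in>{-tau..b}. norm (z s - c) < \<epsilon>)"
  proof (intro exI[of _ \<delta>] conjI allI impI \<open>0 < \<delta>\<close>)
    fix z b
    assume "continuous_on {-tau..b} z \<and> (\<forall>s\<in>{-tau..0}. norm (z s - c) < \<delta>) \<and>
        (\<forall>t\<in>{0..b}. (\<forall>s\<in>{-tau..t}. pos_vec (z s)) \<longrightarrow>
           (z has_vector_derivative dmas_rhs r Y Y' k d (\<lambda>s. z (t + s))) (at t within {0..b}))"
    then have zc: "continuous_on {-tau..b} z" and init: "\<And>s. s \<in> {-tau..0} \<Longrightarrow> dist (z s) c < \<delta>"
      and zd: "\<And>t. t \<in> {0..b} \<Longrightarrow> \<forall>s\<in>{-tau..t}. pos_vec (z s) \<Longrightarrow>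
           (z has_vector_derivative dmas_rhs r Y Y' k d (\<lambda>s. z (t + s))) (at t within {0..b})"
      by (auto simp: dist_norm)
    have "z ` {-tau..b} \<subseteq> U"
    proof (cases "-tau \<le> b")
      case True
      show ?thesis
      proof (rule continuous_on_interval_stays_in_open[OF zc \<open>open U\<close>])
        show "z (-tau) \<in> U"
          using near init \<open>0 \<le> tau\<close> by simp
        fix t
        assume t: "-tau < t" "t \<le> b" and "z ` {-tau..t} \<subseteq> closure U"
        then have zpos: "\<forall>s\<in>{-tau..t}. pos_vec (z s)"
          using pos_closure by blast
        show "z t \<in> U"
        proof (cases "t \<le> 0")
          case True
          then show ?thesis
            using near init t by simp
        next
          case False
          have "relent (c $ j) (z t $ j) < \<eta>" for j
            unfolding \<gamma>[symmetric]
          proof (rule relent_bound_along_solution[OF \<open>0 \<le> tau\<close> cb kd])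
            show "continuous_on {-tau..t} z"
              using t by (intro continuous_on_subset[OF zc]) auto
            fix s
            assume "s \<in> {0..t}"
            then show "(z has_vector_derivative dmas_rhs r Y Y' k d (\<lambda>s'. z (s + s'))) (at s within {0..t})"
              using zd[of s] zpos t by (auto intro: has_vector_derivative_within_subset)
          qed (use False zpos near init in auto)
          then show ?thesis
            using sublevel zpos t by auto
        qed
      qed
    qed simp
    then show "\<forall>s\<in>{-tau..b}. norm (z s - c) < \<epsilon>"
      using close by (auto simp: U_def)
  qed
qed

section \<open>Diagonal conjugacy\<close>

lemma norm_diag_app_le: "norm (diag_app q v) \<le> (\<Sum>j\<in>UNIV. \<bar>q $ j\<bar>) * norm v"
proof -
  have "norm (diag_app q v) \<le> (\<Sum>j\<in>UNIV. \<bar>q $ j * v $ j\<bar>)"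
    using norm_le_l1_cart[of "diag_app q v"] by (simp add: diag_app_def)
  also have "\<dots> \<le> (\<Sum>j\<in>UNIV. \<bar>q $ j\<bar> * norm v)"
    by (intro sum_mono) (simp add: abs_mult mult_left_mono component_le_norm_cart)
  finally show ?thesis
    by (simp add: sum_distrib_right)
qed

lemma bounded_linear_diag_app: "bounded_linear (diag_app q)"
proof (rule bounded_linear_intro[where K = "\<Sum>j\<in>UNIV. \<bar>q $ j\<bar>"])
  show "norm (diag_app q v) \<le> norm v * (\<Sum>j\<in>UNIV. \<bar>q $ j\<bar>)" for v
    using norm_diag_app_le[of q v] by (simp add: mult.commute)
qed (auto simp: diag_app_def vec_eq_iff algebra_simps)

lemma diag_app_inverse:
  assumes "pos_vec q"
  shows "diag_app q (diag_app (\<chi> j. inverse (q $ j)) v) = v"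
    and "diag_app (\<chi> j. inverse (q $ j)) (diag_app q v) = v"
  using assms by (auto simp: diag_app_def vec_eq_iff pos_vec_def less_imp_neq[symmetric])

lemma dmas_rhs_const: "dmas_rhs r Y Y' k d (\<lambda>_. v) = (\<Sum>i<r. (k i * mon v (Y i)) *\<^sub>R (Y' i - Y i))"
  by (simp add: dmas_rhs_def scaleR_diff_right)

lemma lin_conj_pos_equilibrium:
  assumes lc: "lin_conj tau q r Y Y' k d r2 Y2 Y2' k2 d2" and pc: "pos_vec c"
    and eq: "pos_equilibrium r Y Y' k (diag_app q c)"
  shows "pos_equilibrium r2 Y2 Y2' k2 c"
proof -
  have pq: "pos_vec q"
    using lc by (simp add: lin_conj_def)
  have "pos_hist tau (\<lambda>_. c)"
    using pc by (simp add: pos_hist_def)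
  then have "diag_app q (dmas_rhs r2 Y2 Y2' k2 d2 (\<lambda>_. c)) = dmas_rhs r Y Y' k d (\<lambda>_. diag_app q c)"
    using lc by (simp add: lin_conj_def)
  also have "\<dots> = 0"
    using eq by (simp add: dmas_rhs_const pos_equilibrium_def)
  finally have "dmas_rhs r2 Y2 Y2' k2 d2 (\<lambda>_. c) = 0"
    using diag_app_inverse(2)[OF pq] linear_0[OF bounded_linear.linear[OF bounded_linear_diag_app]]
    by metis
  then show ?thesis
    using pc by (simp add: pos_equilibrium_def dmas_rhs_const)
qed

lemma lin_conj_rescaled_solution:
  assumes lc: "lin_conj tau q r Y Y' k d r2 Y2 Y2' k2 d2"
    and sol: "dmas_solution tau r Y Y' k d theta T x" and "ereal b < T"
  defines "z \<equiv> \<lambda>u. diag_app (\<chi> j. inverse (q $ j)) (x u)"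
  shows "continuous_on {-tau..b} z"
    and "\<And>t. t \<in> {0..b} \<Longrightarrow> \<forall>s\<in>{-tau..t}. pos_vec (z s) \<Longrightarrow>
           (z has_vector_derivative dmas_rhs r2 Y2 Y2' k2 d2 (\<lambda>s. z (t + s))) (at t within {0..b})"
proof -
  have pq: "pos_vec q"
    using lc by (simp add: lin_conj_def)
  have x: "x u = diag_app q (z u)" for u
    by (simp add: z_def diag_app_inverse(1)[OF pq])
  have sub: "{-tau..b} \<subseteq> {u. -tau \<le> u \<and> ereal u < T}"
    using \<open>ereal b < T\<close> by (auto intro: le_less_trans[of _ "ereal b"])
  show zc: "continuous_on {-tau..b} z"
    unfolding z_def using sol sub
    by (intro bounded_linear.continuous_on[OF bounded_linear_diag_app])
      (auto simp: dmas_solution_def intro: continuous_on_subset)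
  fix t
  assume t: "t \<in> {0..b}" and zpos: "\<forall>s\<in>{-tau..t}. pos_vec (z s)"
  have "pos_hist tau (\<lambda>s. z (t + s))"
    unfolding pos_hist_def
  proof
    show "continuous_on {-tau..0} (\<lambda>s. z (t + s))"
      using t by (intro continuous_on_compose2[OF zc] continuous_intros) auto
    show "\<forall>s\<in>{-tau..0}. pos_vec (z (t + s))"
      using zpos t by auto
  qed
  then have rhs: "dmas_rhs r Y Y' k d (\<lambda>s. x (t + s)) = diag_app q (dmas_rhs r2 Y2 Y2' k2 d2 (\<lambda>s. z (t + s)))"
    using lc unfolding x by (simp add: lin_conj_def)
  have "(x has_vector_derivative dmas_rhs r Y Y' k d (\<lambda>s. x (t + s)))
      (at t within {t'. 0 \<le> t' \<and> ereal t' < T})"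
  proof -
    have "ereal t < T"
      using t \<open>ereal b < T\<close> by (auto intro: le_less_trans[of _ "ereal b"])
    then show ?thesis
      using sol t by (simp add: dmas_solution_def)
  qed
  then have "(x has_vector_derivative dmas_rhs r Y Y' k d (\<lambda>s. x (t + s))) (at t within {0..b})"
    by (rule has_vector_derivative_within_subset)
      (use \<open>ereal b < T\<close> in \<open>auto intro: le_less_trans[of _ "ereal b"]\<close>)
  from bounded_linear.has_vector_derivative[OF bounded_linear_diag_app[of "\<chi> j. inverse (q $ j)"] this]
  show "(z has_vector_derivative dmas_rhs r2 Y2 Y2' k2 d2 (\<lambda>s. z (t + s))) (at t within {0..b})"
    unfolding rhs by (simp add: z_def[symmetric] diag_app_inverse(2)[OF pq])
qed

lemma mult_divide_add_one_less: "0 \<le> C \<Longrightarrow> 0 < \<epsilon> \<Longrightarrow> C * (\<epsilon> / (C + 1)) < (\<epsilon>::real)"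
  by (simp add: field_simps)

lemma lin_conj_lyapunov_stable:
  assumes lc: "lin_conj tau q r Y Y' k d r2 Y2 Y2' k2 d2"
    and stable: "stable_while_positive tau r2 Y2 Y2' k2 d2 c"
  shows "lyapunov_stable tau r Y Y' k d (diag_app q c)"
  unfolding lyapunov_stable_def
proof (intro allI impI)
  fix \<epsilon> :: real
  assume "0 < \<epsilon>"
  define q' where "q' = (\<chi> j. inverse (q $ j))"
  define C C' where "C = (\<Sum>j\<in>UNIV. \<bar>q $ j\<bar>)" and "C' = (\<Sum>j\<in>UNIV. \<bar>q' $ j\<bar>)"
  have "0 \<le> C" "0 \<le> C'"
    by (simp_all add: C_def C'_def sum_nonneg)
  have pq: "pos_vec q"
    using lc by (simp add: lin_conj_def)
  have "0 < \<epsilon> / (C + 1)"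
    using \<open>0 < \<epsilon>\<close> \<open>0 \<le> C\<close> by simp
  then obtain \<delta>' where "0 < \<delta>'" and \<delta>': "\<forall>z b. continuous_on {-tau..b} z \<and>
      (\<forall>s\<in>{-tau..0}. norm (z s - c) < \<delta>') \<and>
      (\<forall>t\<in>{0..b}. (\<forall>s\<in>{-tau..t}. pos_vec (z s)) \<longrightarrow>
         (z has_vector_derivative dmas_rhs r2 Y2 Y2' k2 d2 (\<lambda>s. z (t + s))) (at t within {0..b})) \<longrightarrow>
      (\<forall>s\<in>{-tau..b}. norm (z s - c) < \<epsilon> / (C + 1))"
    using stable[unfolded stable_while_positive_def, rule_format] by blast
  show "\<exists>\<delta>>0. \<forall>theta T x. pos_hist tau theta \<and> (\<forall>s\<in>{-tau..0}. norm (theta s - diag_app q c) < \<delta>) \<and>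
      dmas_solution tau r Y Y' k d theta T x \<longrightarrow>
      (\<forall>t. 0 \<le> t \<and> ereal t < T \<longrightarrow> (\<forall>s\<in>{-tau..0}. norm (x (t + s) - diag_app q c) < \<epsilon>))"
  proof (intro exI[of _ "\<delta>' / (C' + 1)"] conjI allI impI ballI)
    show "0 < \<delta>' / (C' + 1)"
      using \<open>0 < \<delta>'\<close> \<open>0 \<le> C'\<close> by simp
    fix theta T x t s
    assume hyps: "pos_hist tau theta \<and> (\<forall>s\<in>{-tau..0}. norm (theta s - diag_app q c) < \<delta>' / (C' + 1)) \<and>
      dmas_solution tau r Y Y' k d theta T x"
      and t: "0 \<le> t \<and> ereal t < T" and s: "s \<in> {-tau..0}"
    define z where "z = (\<lambda>u. diag_app q' (x u))"
    have rescale: "diag_app q' (diag_app q v) = v" "diag_app q (diag_app q' v) = v" for v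
      by (simp_all add: q'_def diag_app_inverse[OF pq])
    have lin_q: "linear (diag_app q)" and lin_q': "linear (diag_app q')"
      by (simp_all add: bounded_linear.linear[OF bounded_linear_diag_app])
    have "norm (z (t + s) - c) < \<epsilon> / (C + 1)"
    proof (rule \<delta>'[rule_format], intro conjI)
      show "t + s \<in> {-tau..t}"
        using s t by simp
      show "continuous_on {-tau..t} z"
        and "\<forall>t'\<in>{0..t}. (\<forall>s\<in>{-tau..t'}. pos_vec (z s)) \<longrightarrow>
           (z has_vector_derivative dmas_rhs r2 Y2 Y2' k2 d2 (\<lambda>s. z (t' + s))) (at t' within {0..t})"
        using lin_conj_rescaled_solution[OF lc _ conjunct2[OF t]] hyps by (auto simp: z_def q'_def)
      show "\<forall>s\<in>{-tau..0}. norm (z s - c) < \<delta>'"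
      proof
        fix s
        assume s: "s \<in> {-tau..0}"
        have "norm (z s - c) = norm (diag_app q' (theta s - diag_app q c))"
          using hyps s by (simp add: z_def dmas_solution_def linear_diff[OF lin_q'] rescale)
        also have "\<dots> \<le> C' * norm (theta s - diag_app q c)"
          unfolding C'_def by (rule norm_diag_app_le)
        also have "\<dots> \<le> C' * (\<delta>' / (C' + 1))"
          using hyps s \<open>0 \<le> C'\<close> by (intro mult_left_mono) (auto intro: less_imp_le)
        also have "\<dots> < \<delta>'"
          by (rule mult_divide_add_one_less[OF \<open>0 \<le> C'\<close> \<open>0 < \<delta>'\<close>])
        finally show "norm (z s - c) < \<delta>'" .
      qed
    qed
    have "norm (x (t + s) - diag_app q c) = norm (diag_app q (z (t + s) - c))"
      by (simp add: z_def linear_diff[OF lin_q] rescale)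
    also have "\<dots> \<le> C * norm (z (t + s) - c)"
      unfolding C_def by (rule norm_diag_app_le)
    also have "\<dots> \<le> C * (\<epsilon> / (C + 1))"
      using \<open>norm (z (t + s) - c) < _\<close> \<open>0 \<le> C\<close> by (intro mult_left_mono) auto
    also have "\<dots> < \<epsilon>"
      by (rule mult_divide_add_one_less[OF \<open>0 \<le> C\<close> \<open>0 < \<epsilon>\<close>])
    finally show "norm (x (t + s) - diag_app q c) < \<epsilon>" .
  qed
qed

theorem mainTheorem2:
  fixes Y Y' :: "nat \<Rightarrow> real^'n" and k d :: "nat \<Rightarrow> real" and r :: nat and tau :: real
    and xs :: "real^'n"
  assumes "lcDCB tau r Y Y' k d"
    and "pos_equilibrium r Y Y' k xs"
  shows "lyapunov_stable tau r Y Y' k d xs"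
proof (cases "0 \<le> tau")
  case False
  \<comment> \<open>then \<open>{-tau..0}\<close> is empty and the stability condition holds vacuously\<close>
  then show ?thesis
    by (auto simp: lyapunov_stable_def intro: exI[of _ 1])
next
  case True
  obtain q r2 Y2 Y2' k2 d2 xb where lc: "lin_conj tau q r Y Y' k d r2 Y2 Y2' k2 d2"
    and kd: "\<forall>i<r2. 0 < k2 i \<and> 0 \<le> d2 i \<and> d2 i \<le> tau" and cb: "complex_balanced r2 Y2 Y2' k2 xb"
    using assms(1) by (auto simp: lcDCB_def DCB_def dmas_def)
  have pq: "pos_vec q"
    using lc by (simp add: lin_conj_def)
  define c where "c = diag_app (\<chi> j. inverse (q $ j)) xs"
  have xs: "xs = diag_app q c"
    by (simp add: c_def diag_app_inverse(1)[OF pq])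
  have "pos_vec c"
    using assms(2) pq by (simp add: c_def pos_equilibrium_def diag_app_def pos_vec_def)
  then have "pos_equilibrium r2 Y2 Y2' k2 c"
    using assms(2) xs by (intro lin_conj_pos_equilibrium[OF lc]) simp_all
  then have "complex_balanced r2 Y2 Y2' k2 c"
    using kd by (intro complex_balanced_pos_equilibrium[OF cb]) auto
  then have "stable_while_positive tau r2 Y2 Y2' k2 d2 c"
    using kd by (intro complex_balanced_stable_while_positive[OF True]) auto
  then show ?thesis
    unfolding xs by (rule lin_conj_lyapunov_stable[OF lc])
qed

end
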